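(* Let $(X,\mu)$ be a non-atomic probability measure space equipped with a tree $\mathcal{T}$, with associated dyadic maximal operator $\mathcal{M}_{\mathcal{T}}$, and let $0<q<1$. Let $g:(0,1]\to\mathbb{R}^+$ be integrable and non-increasing with $\int_0^1\big(\frac1t\int_0^t g\big)^q dt<+\infty$, and let $\phi_n:X\to\mathbb{R}^+$ be measurable with $\phi_n^*=g$ for all $n$ and $$\lim_n\int_X(\mathcal{M}_{\mathcal{T}}\phi_n)^q\,d\mu=\int_0^1\Big(\frac1t\int_0^t g\Big)^q dt.$$ Then $$\lim_n\int_0^1\Big|(\mathcal{M}_{\mathcal{T}}\phi_n)^*(t)-\frac1t\int_0^t g\Big|^q dt=0.$$
   Context: A set $\mathcal{T}$ of measurable subsets of $X$ is a tree if: (i) $X\in\mathcal{T}$ and $\mu(I)>0$ for every $I\in\mathcal{T}$; (ii) for every $I\in\mathcal{T}$ there is a finite or countable set $C(I)\subseteq\mathcal{T}$ with at least two elements, consisting of pairwise disjoint subsets of $I$ whose union is $I$; (iii) $\mathcal{T}=\bigcup_{m\ge0}\mathcal{T}_{(m)}$ where $\mathcal{T}_{(0)}=\{X\}$ and $\mathcal{T}_{(m+1)}=\bigcup_{I\in\mathcal{T}_{(m)}}C(I)$; (iv) $\lim_{m\to\infty}\sup_{I\in\mathcal{T}_{(m)}}\mu(I)=0$. The dyadic maximal operator is $\mathcal{M}_{\mathcal{T}}\phi(x)=\sup\{\frac{1}{\mu(I)}\int_I|\phi|\,d\mu : x\in I\in\mathcal{T}\}$. The decreasing rearrangement of a measurable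 $\psi$ on $X$ is $\psi^*(t)=\sup_{e\subseteq X,\ \mu(e)=t}\ \inf_{x\in e}|\psi(x)|$ for $0<t\le1$. *)

theory Defs
  imports "HOL-Probability.Probability"
begin

definition nonatomic :: "'a measure \<Rightarrow> bool" where
  "nonatomic M \<longleftrightarrow> (\<forall>A\<in>sets M. measure M A > 0 \<longrightarrow>
      (\<exists>B\<in>sets M. B \<subseteq> A \<and> 0 < measure M B \<and> measure M B < measure M A))"

fun tree_level :: "('a set \<Rightarrow> 'a set set) \<Rightarrow> 'a set \<Rightarrow> nat \<Rightarrow> 'a set set" where
  "tree_level C X 0 = {X}"
| "tree_level C X (Suc m) = \<Union> (C ` tree_level C X m)"

definition is_tree :: "'a measure \<Rightarrow> 'a set set \<Rightarrow> bool" where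
  "is_tree M T \<longleftrightarrow>
     space M \<in> T \<and> (\<forall>I\<in>T. I \<in> sets M \<and> measure M I > 0) \<and>
     (\<exists>C. (\<forall>I\<in>T. C I \<subseteq> T \<and> countable (C I) \<and>
              (\<exists>J K. J \<in> C I \<and> K \<in> C I \<and> J \<noteq> K) \<and>
              disjoint (C I) \<and> (\<forall>J\<in>C I. J \<subseteq> I) \<and> \<Union> (C I) = I) \<and>
          T = (\<Union>m. tree_level C (space M) m) \<and>
          (\<lambda>m. Sup (measure M ` tree_level C (space M) m)) \<longlonglongrightarrow> 0)"

definition dyadic_max :: "'a measure \<Rightarrow> 'a set set \<Rightarrow> ('a \<Rightarrow> real) \<Rightarrow> 'a \<Rightarrow> ennreal" where
  "dyadic_max M T \<phi> x =
     (SUP I\<in>{I\<in>T. x \<in> I}. ennreal (1 / measure M I) * (\<integral>\<^sup>+ y\<in>I. ennreal \<bar>\<phi> y\<bar> \<partial>M))"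

text \<open>Decreasing rearrangement of a [0,\<infinity>]-valued function (the absolute value is implicit).\<close>
definition rearr :: "'a measure \<Rightarrow> ('a \<Rightarrow> ennreal) \<Rightarrow> real \<Rightarrow> ennreal" where
  "rearr M \<psi> t = (SUP e\<in>{e\<in>sets M. measure M e = t}. INF x\<in>e. \<psi> x)"

definition epowr :: "ennreal \<Rightarrow> real \<Rightarrow> ennreal" where
  "epowr a q = (if a = top then top else ennreal (enn2real a powr q))"

definition ediff :: "ennreal \<Rightarrow> real \<Rightarrow> ennreal" where
  "ediff a b = (if a = top then top else ennreal \<bar>enn2real a - b\<bar>)"

definition avg :: "(real \<Rightarrow> real) \<Rightarrow> real \<Rightarrow> real" where
  "avg g t = (1 / t) * (LBINT s:{0<..t}. g s)"

end

theory Submission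
  imports Defs
begin

(*
  For 0 < t <= 1 the rearrangement of the dyadic maximal function M phi is at most the Hardy
  average (1/t) int_0^t g: the level set {M phi > l} is a disjoint union of maximal tree nodes on
  which the average of phi exceeds l, so  l mu{M phi > l} <= int_{M phi > l} phi
  <= int_0^{mu{M phi > l}} g,  and as the Hardy average is non-increasing this forces
  l <= (1/t) int_0^t g as soon as mu{M phi > l} >= t.  By the layer cake formula
  int (M phi)^q <= int_0^1 ((M phi)^* )^q, so the hypothesis yields
  int_0^1 h^q - ((M phi_n)^* )^q --> 0 for the Hardy average h of g.  For 0 <= f <= h and
  0 < d < 1 one has  (h - f)^q <= d^q h^q + (h^q - f^q) / (1 - (1 - d)^q);  letting first
  n --> oo and then d --> 0 gives the claim.
*)

section \<open>Non-atomic probability spaces and decreasing rearrangements\<close>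

lemma exists_half_maximal:
  fixes f :: "'b \<Rightarrow> real"
  assumes "F \<noteq> {}" and bdd: "bdd_above (f ` F)" and "\<And>x. x \<in> F \<Longrightarrow> 0 \<le> f x"
  shows "\<exists>x\<in>F. \<forall>y\<in>F. f y \<le> 2 * f x"
proof (cases "Sup (f ` F) = 0")
  case True
  obtain x where "x \<in> F" using assms(1) by blast
  moreover have "f y \<le> 0" if "y \<in> F" for y
    using cSup_upper[OF _ bdd, of "f y"] that True by simp
  ultimately show ?thesis using assms(3) by force
next
  case False
  obtain x where x: "x \<in> F" using assms(1) by blast
  have "0 \<le> Sup (f ` F)"
    using cSup_upper[OF _ bdd, of "f x"] x assms(3)[OF x] by simp
  then have "Sup (f ` F) / 2 < Sup (f ` F)" using False by simp
  then obtain x where "x \<in> F" "Sup (f ` F) / 2 < f x"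
    using less_cSup_iff[OF _ bdd] assms(1) by blast
  then show ?thesis
    using cSup_upper[OF _ bdd] by (intro bexI[of _ x]) fastforce+
qed

context prob_space
begin

lemma nonatomic_small_subset:
  assumes "nonatomic M" and A: "A \<in> events" "0 < prob A" and "0 < e"
  shows "\<exists>B\<in>events. B \<subseteq> A \<and> 0 < prob B \<and> prob B \<le> e"
proof -
  have halving: "\<exists>B\<in>events. B \<subseteq> A \<and> 0 < prob B \<and> prob B \<le> prob A / 2 ^ n" for n
  proof (induction n)
    case 0
    then show ?case using A by auto
  next
    case (Suc n)
    then obtain B where B: "B \<in> events" "B \<subseteq> A" "0 < prob B" "prob B \<le> prob A / 2 ^ n"
      by auto
    then obtain B' where B': "B' \<in> events" "B' \<subseteq> B" "0 < prob B'" "prob B' < prob B"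
      using \<open>nonatomic M\<close> unfolding nonatomic_def by blast
    have diff: "prob (B - B') = prob B - prob B'"
      using B B' by (simp add: finite_measure_Diff)
    \<comment> \<open>the smaller of B' and B - B' has at most half the measure of B\<close>
    show ?case
    proof (cases "prob B' \<le> prob B / 2")
      case True
      then have "prob B' \<le> prob A / 2 ^ Suc n" using B(4) by simp
      then show ?thesis using B B' by blast
    next
      case False
      then have "prob (B - B') \<le> prob A / 2 ^ Suc n" using B(4) diff by simp
      moreover have "0 < prob (B - B')" using B'(4) diff by simp
      ultimately show ?thesis using B B' by blast
    qed
  qed
  obtain n where "prob A / e < 2 ^ n"
    using real_arch_pow[of 2 "prob A / e"] by auto
  then have "prob A / 2 ^ n < e"
    using \<open>0 < e\<close> by (simp add: field_simps)
  moreover obtain B where "B \<in> events" "B \<subseteq> A" "0 < prob B" "prob B \<le> prob A / 2 ^ n"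
    using halving by blast
  ultimately show ?thesis by (intro bexI[of _ B]) auto
qed

lemma exists_saturated_subset:
  assumes A: "A \<in> events" and "0 \<le> t"
  obtains e where "e \<in> events" "e \<subseteq> A" "prob e \<le> t"
    "\<And>G. G \<in> events \<Longrightarrow> G \<subseteq> A - e \<Longrightarrow> prob G \<le> t - prob e \<Longrightarrow> prob G = 0"
proof -
  define adm where "adm D F \<longleftrightarrow> F \<in> events \<and> F \<subseteq> A - D \<and> prob F \<le> t - prob D" for D F
  have "\<exists>F. prob D \<le> t \<longrightarrow> adm D F \<and> (\<forall>F'. adm D F' \<longrightarrow> prob F' \<le> 2 * prob F)" for D
  proof (cases "prob D \<le> t")
    case True
    have "\<exists>F\<in>{F. adm D F}. \<forall>F'\<in>{F. adm D F}. prob F' \<le> 2 * prob F"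
    proof (rule exists_half_maximal)
      show "{F. adm D F} \<noteq> {}" using True by (auto simp: adm_def intro!: exI[of _ "{}"])
      show "bdd_above (prob ` {F. adm D F})" by (rule bdd_aboveI[of _ 1]) auto
    qed auto
    then show ?thesis by auto
  qed simp
  then obtain nxt where nxt: "\<And>D. prob D \<le> t \<Longrightarrow> adm D (nxt D)"
    "\<And>D F'. prob D \<le> t \<Longrightarrow> adm D F' \<Longrightarrow> prob F' \<le> 2 * prob (nxt D)"
    by metis
  \<comment> \<open>greedily add a subset of at least half the largest admissible measure\<close>
  define D where "D = rec_nat {} (\<lambda>_ X. X \<union> nxt X)"
  have D_Suc: "D (Suc k) = D k \<union> nxt (D k)" for k
    by (simp add: D_def)
  have nxt_add: "prob (D' \<union> nxt D') = prob D' + prob (nxt D')"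
    if "D' \<in> events" "prob D' \<le> t" for D'
    using nxt(1)[OF that(2)] that(1) by (intro finite_measure_Union) (auto simp: adm_def)
  have D_inv: "D k \<in> events \<and> D k \<subseteq> A \<and> prob (D k) \<le> t" for k
  proof (induction k)
    case 0
    show ?case using \<open>0 \<le> t\<close> by (simp add: D_def)
  next
    case (Suc k)
    then show ?case using nxt(1)[of "D k"] nxt_add[of "D k"] by (auto simp: D_Suc adm_def)
  qed
  define e where "e = (\<Union>k. D k)"
  have "incseq D" by (rule incseq_SucI) (simp add: D_Suc)
  then have lim: "(\<lambda>k. prob (D k)) \<longlonglongrightarrow> prob e"
    using D_inv unfolding e_def by (intro finite_Lim_measure_incseq) auto
  \<comment> \<open>the added pieces have measures tending to 0, each at least half that of any admissible G\<close>
  have "(\<lambda>k. prob (D (Suc k)) - prob (D k)) \<longlonglongrightarrow> prob e - prob e"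
    by (intro tendsto_diff LIMSEQ_Suc[OF lim] lim)
  then have nxt_lim: "(\<lambda>k. 2 * prob (nxt (D k))) \<longlonglongrightarrow> 2 * 0"
    using nxt_add D_inv by (intro tendsto_mult_left) (simp add: D_Suc)
  show ?thesis
  proof
    show "e \<in> events" "e \<subseteq> A" using D_inv by (auto simp: e_def)
    show "prob e \<le> t" using lim D_inv by (intro LIMSEQ_le_const2) auto
    fix G assume G: "G \<in> events" "G \<subseteq> A - e" "prob G \<le> t - prob e"
    have "D k \<subseteq> e" for k by (auto simp: e_def)
    then have "adm (D k) G" for k
      using G \<open>e \<in> events\<close> finite_measure_mono[of "D k" e] by (auto simp: adm_def)
    then have "prob G \<le> 2 * prob (nxt (D k))" for k using nxt(2) D_inv by blast
    then have "prob G \<le> 2 * 0" by (intro LIMSEQ_le_const[OF nxt_lim]) blast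
    then show "prob G = 0" using measure_nonneg[of M G] by linarith
  qed
qed

lemma nonatomic_exact_subset:
  assumes "nonatomic M" and A: "A \<in> events" and t: "0 \<le> t" "t \<le> prob A"
  shows "\<exists>e\<in>events. e \<subseteq> A \<and> prob e = t"
proof -
  obtain e where e: "e \<in> events" "e \<subseteq> A" "prob e \<le> t"
    and null: "\<And>G. G \<in> events \<Longrightarrow> G \<subseteq> A - e \<Longrightarrow> prob G \<le> t - prob e \<Longrightarrow> prob G = 0"
    using exists_saturated_subset[OF A t(1)] by blast
  have "\<not> prob e < t"
  proof
    assume "prob e < t"
    moreover have "prob (A - e) = prob A - prob e" using e A by (simp add: finite_measure_Diff)
    ultimately obtain G where "G \<in> events" "G \<subseteq> A - e" "0 < prob G" "prob G \<le> t - prob e"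
      using nonatomic_small_subset[OF \<open>nonatomic M\<close>, of "A - e" "t - prob e"] e A t by auto
    then show False using null by fastforce
  qed
  then show ?thesis using e by (intro bexI[of _ e]) auto
qed

lemma tendsto_prob_level_sets:
  assumes [measurable]: "\<psi> \<in> borel_measurable M"
  shows "(\<lambda>k. prob {x\<in>space M. c + ennreal (1 / Suc k) < \<psi> x}) \<longlonglongrightarrow> prob {x\<in>space M. c < \<psi> x}"
proof -
  define A where "A k = {x\<in>space M. c + ennreal (1 / Suc k) < \<psi> x}" for k :: nat
  have events: "A k \<in> events" for k unfolding A_def by measurable
  have "incseq A"
  proof (rule incseq_SucI)
    fix k
    have le: "c + ennreal (1 / Suc (Suc k)) \<le> c + ennreal (1 / Suc k)"
      by (intro add_left_mono ennreal_leI) (simp add: frac_le)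
    show "A k \<subseteq> A (Suc k)" unfolding A_def using le_less_trans[OF le] by blast
  qed
  then have "(\<lambda>k. prob (A k)) \<longlonglongrightarrow> prob (\<Union>k. A k)"
    using events by (intro finite_Lim_measure_incseq) auto
  moreover have "(\<Union>k. A k) = {x\<in>space M. c < \<psi> x}"
  proof (intro equalityI subsetI)
    fix x assume "x \<in> (\<Union>k. A k)"
    then obtain k where x: "x \<in> space M" and less: "c + ennreal (1 / Suc k) < \<psi> x"
      unfolding A_def by blast
    have "c \<le> c + ennreal (1 / Suc k)" by (metis add.right_neutral add_left_mono zero_le)
    then have "c < \<psi> x" using less by (rule le_less_trans)
    then show "x \<in> {x\<in>space M. c < \<psi> x}" using x by simp
  next
    fix x assume x: "x \<in> {x\<in>space M. c < \<psi> x}"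
    have "(\<lambda>k. c + ennreal (1 / Suc k)) \<longlonglongrightarrow> c + ennreal 0"
      by (intro tendsto_add tendsto_const tendsto_ennrealI LIMSEQ_Suc[OF lim_1_over_n])
    then have "eventually (\<lambda>k. c + ennreal (1 / Suc k) < \<psi> x) sequentially"
      using x by (intro order_tendstoD(2)) auto
    then obtain k where "c + ennreal (1 / Suc k) < \<psi> x"
      by (auto simp: eventually_sequentially)
    then show "x \<in> (\<Union>k. A k)" using x unfolding A_def by blast
  qed
  ultimately show ?thesis by (simp only: A_def)
qed

lemma less_rearr:
  assumes "nonatomic M" and [measurable]: "\<psi> \<in> borel_measurable M"
    and "0 < t" and t_less: "t < prob {x\<in>space M. c < \<psi> x}"
  shows "c < rearr M \<psi> t"
proof -
  have "c \<noteq> \<top>"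
  proof
    assume "c = \<top>"
    then have "prob {x\<in>space M. c < \<psi> x} = 0" by simp
    then show False using t_less \<open>0 < t\<close> by simp
  qed
  let ?A = "\<lambda>k. {x\<in>space M. c + ennreal (1 / Suc k) < \<psi> x}"
  have "eventually (\<lambda>k. t < prob (?A k)) sequentially"
    using tendsto_prob_level_sets[OF assms(2)] t_less by (rule order_tendstoD(1))
  then obtain k where "t < prob (?A k)"
    by (auto simp: eventually_sequentially)
  moreover have "?A k \<in> events" by measurable
  ultimately obtain e where e: "e \<in> events" "e \<subseteq> ?A k" "prob e = t"
    using nonatomic_exact_subset[OF \<open>nonatomic M\<close>, of "?A k" t] \<open>0 < t\<close> by auto
  have "c < c + ennreal (1 / Suc k)"
    using \<open>c \<noteq> \<top>\<close> ennreal_add_left_cancel_less[of c 0] by simp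
  also have "\<dots> \<le> (INF x\<in>e. \<psi> x)"
    using e by (intro INF_greatest) auto
  also have "\<dots> \<le> rearr M \<psi> t"
    unfolding rearr_def using e by (intro SUP_upper) auto
  finally show ?thesis .
qed

lemma rearr_antimono:
  assumes "nonatomic M" and "0 \<le> t" "t \<le> u"
  shows "rearr M \<psi> u \<le> rearr M \<psi> t"
  unfolding rearr_def
proof (rule SUP_least)
  fix e assume e: "e \<in> {e \<in> events. prob e = u}"
  then obtain e' where e': "e' \<in> events" "e' \<subseteq> e" "prob e' = t"
    using nonatomic_exact_subset[OF assms(1), of e t] assms by auto
  have "(INF x\<in>e. \<psi> x) \<le> (INF x\<in>e'. \<psi> x)"
    using e' by (intro INF_superset_mono) auto
  also have "\<dots> \<le> (SUP e\<in>{e \<in> events. prob e = t}. INF x\<in>e. \<psi> x)"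
    using e' by (intro SUP_upper) auto
  finally show "(INF x\<in>e. \<psi> x) \<le> (SUP e\<in>{e \<in> events. prob e = t}. INF x\<in>e. \<psi> x)" .
qed

end

section \<open>The layer cake formula\<close>

lemma emeasure_lborel_below_ennreal:
  "emeasure lborel {s::real. 0 \<le> s \<and> ennreal s < c} = c"
proof (cases c)
  case (real r)
  then have "{s::real. 0 \<le> s \<and> ennreal s < c} = {0..<r}"
    by (auto simp: ennreal_less_iff)
  then show ?thesis using real by simp
next
  case top
  have less: "ennreal r < emeasure lborel {0::real..}" if "0 \<le> r" for r
  proof -
    have "ennreal r < ennreal (r + 1)" using that by (simp add: ennreal_less_iff)
    also have "\<dots> \<le> emeasure lborel {0::real..}"
      using emeasure_mono[of "{0..<r + 1}" "{0::real..}" lborel] that by (simp add: subset_eq)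
    finally show ?thesis .
  qed
  have "emeasure lborel {0::real..} = \<top>"
  proof (rule ccontr)
    assume "emeasure lborel {0::real..} \<noteq> \<top>"
    then obtain r where "emeasure lborel {0::real..} = ennreal r" "0 \<le> r"
      by (cases "emeasure lborel {0::real..}") auto
    then show False using less[of r] by simp
  qed
  moreover have "{s::real. 0 \<le> s \<and> ennreal s < c} = {0..}" using top by auto
  ultimately show ?thesis using top by simp
qed

lemma nn_integral_layer_cake:
  assumes "sigma_finite_measure M" and [measurable]: "F \<in> borel_measurable M"
  shows "(\<integral>\<^sup>+x. F x \<partial>M) = (\<integral>\<^sup>+s\<in>{0..}. emeasure M {x\<in>space M. ennreal s < F x} \<partial>lborel)"
proof -
  interpret pair_sigma_finite M lborel
    using assms(1) by (simp add: pair_sigma_finite_def lborel.sigma_finite_measure_axioms)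
  let ?I = "\<lambda>x s. indicator {s::real. 0 \<le> s \<and> ennreal s < F x} s :: ennreal"
  have "(\<lambda>(x, s). ?I x s) \<in> borel_measurable (M \<Otimes>\<^sub>M lborel)"
    unfolding indicator_def by measurable
  moreover have "F x = (\<integral>\<^sup>+s. ?I x s \<partial>lborel)" for x
    by (simp add: emeasure_lborel_below_ennreal)
  ultimately have "(\<integral>\<^sup>+x. F x \<partial>M) = (\<integral>\<^sup>+s. (\<integral>\<^sup>+x. ?I x s \<partial>M) \<partial>lborel)"
    using Fubini'[of ?I] by simp
  also have "\<dots> = (\<integral>\<^sup>+s\<in>{0..}. emeasure M {x\<in>space M. ennreal s < F x} \<partial>lborel)"
  proof (intro nn_integral_cong)
    fix s :: real
    have "(\<integral>\<^sup>+x. ?I x s \<partial>M) = (\<integral>\<^sup>+x. indicator {0..} s * indicator {x\<in>space M. ennreal s < F x} x \<partial>M)"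
      by (intro nn_integral_cong) (auto simp: indicator_def)
    then show "(\<integral>\<^sup>+x. ?I x s \<partial>M) = emeasure M {x\<in>space M. ennreal s < F x} * indicator {0..} s"
      by (simp add: nn_integral_cmult mult.commute)
  qed
  finally show ?thesis .
qed

lemma nn_integral_mono_level_sets:
  assumes "sigma_finite_measure M" "sigma_finite_measure N"
    and "F \<in> borel_measurable M" "G \<in> borel_measurable N"
    and "\<And>s::real. 0 \<le> s \<Longrightarrow>
      emeasure M {x\<in>space M. ennreal s < F x} \<le> emeasure N {x\<in>space N. ennreal s < G x}"
  shows "(\<integral>\<^sup>+x. F x \<partial>M) \<le> (\<integral>\<^sup>+x. G x \<partial>N)"
  unfolding nn_integral_layer_cake[OF assms(1,3)] nn_integral_layer_cake[OF assms(2,4)]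
  by (intro nn_integral_mono) (auto simp: indicator_def intro: assms(5))

section \<open>Trees and the weak type estimate for the dyadic maximal operator\<close>

locale tree_levels =
  fixes C :: "'a set \<Rightarrow> 'a set set" and X :: "'a set"
  assumes countable_children: "\<And>I m. I \<in> tree_level C X m \<Longrightarrow> countable (C I)"
    and disjoint_children: "\<And>I m. I \<in> tree_level C X m \<Longrightarrow> disjoint (C I)"
    and children_subset: "\<And>I J m. I \<in> tree_level C X m \<Longrightarrow> J \<in> C I \<Longrightarrow> J \<subseteq> I"
begin

abbreviation nodes :: "'a set set" where
  "nodes \<equiv> \<Union>m. tree_level C X m"

lemma countable_tree_level: "countable (tree_level C X m)"
  by (induction m) (auto intro!: countable_UN countable_children)

lemma countable_nodes: "countable nodes"
  using countable_tree_level by auto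

lemma disjoint_tree_level: "disjoint (tree_level C X m)"
proof (induction m)
  case 0
  then show ?case by simp
next
  case (Suc m)
  show ?case
  proof (rule disjointI)
    fix J J' assume "J \<in> tree_level C X (Suc m)" "J' \<in> tree_level C X (Suc m)" "J \<noteq> J'"
    then obtain I I' where I: "I \<in> tree_level C X m" "J \<in> C I" "I' \<in> tree_level C X m" "J' \<in> C I'"
      by auto
    show "J \<inter> J' = {}"
    proof (cases "I = I'")
      case True
      then show ?thesis
        using disjoint_children[OF I(1)] I \<open>J \<noteq> J'\<close> by (auto dest: disjointD)
    next
      case False
      then have "I \<inter> I' = {}" using Suc I by (auto dest: disjointD)
      then show ?thesis using children_subset I by blast
    qed
  qed
qed

lemma tree_level_ancestor:
  "k \<le> m \<Longrightarrow> J \<in> tree_level C X m \<Longrightarrow> \<exists>I\<in>tree_level C X k. J \<subseteq> I"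
proof (induction m arbitrary: J rule: dec_induct)
  case base
  then show ?case by blast
next
  case (step m)
  then obtain I where I: "I \<in> tree_level C X m" "J \<in> C I" by auto
  obtain I' where "I' \<in> tree_level C X k" "I \<subseteq> I'" using step.IH[OF I(1)] by blast
  moreover have "J \<subseteq> I" using children_subset[OF I] .
  ultimately show ?case by blast
qed

lemma tree_level_nested:
  assumes "I \<in> tree_level C X m" "J \<in> tree_level C X n" "m \<le> n" "I \<inter> J \<noteq> {}"
  shows "J \<subseteq> I"
proof -
  obtain K where K: "K \<in> tree_level C X m" "J \<subseteq> K"
    using tree_level_ancestor[OF assms(3,2)] by blast
  have "K \<inter> I \<noteq> {}" using K(2) assms(4) by blast
  then have "K = I" using disjointD[OF disjoint_tree_level K(1) assms(1)] by blast
  with K show ?thesis by simp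
qed

definition maximal_nodes :: "('a set \<Rightarrow> bool) \<Rightarrow> 'a set set" where
  "maximal_nodes P = {I \<in> nodes. P I \<and> (\<forall>J\<in>nodes. P J \<longrightarrow> I \<subseteq> J \<longrightarrow> J = I)}"

lemma countable_maximal_nodes: "countable (maximal_nodes P)"
  by (rule countable_subset[OF _ countable_nodes]) (auto simp: maximal_nodes_def)

lemma disjoint_maximal_nodes: "disjoint (maximal_nodes P)"
proof (rule disjointI)
  fix I J assume I: "I \<in> maximal_nodes P" and J: "J \<in> maximal_nodes P" and "I \<noteq> J"
  show "I \<inter> J = {}"
  proof (rule ccontr)
    assume meet: "I \<inter> J \<noteq> {}"
    obtain m n where "I \<in> tree_level C X m" "J \<in> tree_level C X n"
      using I J by (auto simp: maximal_nodes_def)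
    then have "I \<subseteq> J \<or> J \<subseteq> I"
      using tree_level_nested meet by (metis inf_commute nle_le)
    then show False using I J \<open>I \<noteq> J\<close> by (auto simp: maximal_nodes_def)
  qed
qed

lemma subset_maximal_node:
  assumes "I \<in> nodes" "P I" "I \<noteq> {}"
  shows "\<exists>J\<in>maximal_nodes P. I \<subseteq> J"
proof -
  let ?Q = "\<lambda>k. \<exists>J\<in>tree_level C X k. P J \<and> I \<subseteq> J"
  define k where "k = (LEAST k. ?Q k)"
  obtain m where "I \<in> tree_level C X m" using assms(1) by blast
  then have "?Q m" using assms(2) by blast
  then have "?Q k" unfolding k_def by (rule LeastI)
  then obtain J where J: "J \<in> tree_level C X k" "P J" "I \<subseteq> J" by blast
  have "J' = J" if J': "J' \<in> tree_level C X k'" "P J'" "J \<subseteq> J'" for J' k'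
  proof -
    have "?Q k'" using J' J(3) by blast
    then have "k \<le> k'" unfolding k_def by (rule Least_le)
    moreover have "J \<inter> J' \<noteq> {}" using J' J(3) assms(3) by blast
    ultimately have "J' \<subseteq> J" by (rule tree_level_nested[OF J(1) J'(1)])
    then show ?thesis using J'(3) by blast
  qed
  then have "J \<in> maximal_nodes P" using J by (auto simp: maximal_nodes_def)
  then show ?thesis using J(3) by blast
qed

end

lemma is_tree_levels:
  assumes "is_tree M T"
  obtains C where "tree_levels C (space M)" and "T = (\<Union>m. tree_level C (space M) m)"
proof -
  from assms obtain C where
    C: "\<forall>I\<in>T. C I \<subseteq> T \<and> countable (C I) \<and> (\<exists>J K. J \<in> C I \<and> K \<in> C I \<and> J \<noteq> K) \<and>
      disjoint (C I) \<and> (\<forall>J\<in>C I. J \<subseteq> I) \<and> \<Union> (C I) = I"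
    and T: "T = (\<Union>m. tree_level C (space M) m)"
    unfolding is_tree_def by blast
  have C_level: "countable (C I) \<and> disjoint (C I) \<and> (\<forall>J\<in>C I. J \<subseteq> I)"
    if "I \<in> tree_level C (space M) m" for I m
  proof -
    have "I \<in> T" using that unfolding T by blast
    then show ?thesis using C by simp
  qed
  have "tree_levels C (space M)"
    by unfold_locales (use C_level in blast)+
  then show ?thesis using T that by blast
qed

lemma cmult_emeasure_Union_le:
  assumes "sets N = sets M" and "countable F" "disjoint F" "F \<subseteq> sets M"
    and "\<And>I. I \<in> F \<Longrightarrow> c * emeasure M I \<le> emeasure N I"
  shows "c * emeasure M (\<Union>F) \<le> emeasure N (\<Union>F)"
proof -
  have disj: "disjoint_family_on (\<lambda>I. I) F"
    using assms(3) by (auto simp: disjoint_family_on_def dest: disjointD)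
  have sum: "emeasure N' (\<Union>F) = (\<integral>\<^sup>+I. emeasure N' I \<partial>count_space F)"
    if "sets N' = sets M" for N'
    using emeasure_UN_countable[of F "\<lambda>I. I" N', OF _ assms(2) disj] assms(4) that by auto
  have "c * emeasure M (\<Union>F) = (\<integral>\<^sup>+I. c * emeasure M I \<partial>count_space F)"
    by (simp add: sum nn_integral_cmult)
  also have "\<dots> \<le> (\<integral>\<^sup>+I. emeasure N I \<partial>count_space F)"
    using assms(5) by (intro nn_integral_mono) auto
  also have "\<dots> = emeasure N (\<Union>F)"
    using sum[OF assms(1)] by simp
  finally show ?thesis .
qed

definition average :: "'a measure \<Rightarrow> ('a \<Rightarrow> real) \<Rightarrow> 'a set \<Rightarrow> ennreal" where
  "average M \<phi> I = ennreal (1 / measure M I) * (\<integral>\<^sup>+ y\<in>I. ennreal \<bar>\<phi> y\<bar> \<partial>M)"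

locale tree_space = prob_space M for M :: "'a measure" +
  fixes T :: "'a set set"
  assumes tree: "is_tree M T"
begin

lemma tree_sets: "I \<in> T \<Longrightarrow> I \<in> events"
  using tree by (auto simp: is_tree_def)

lemma tree_prob_pos: "I \<in> T \<Longrightarrow> 0 < prob I"
  using tree by (auto simp: is_tree_def)

lemma countable_tree: "countable T"
proof -
  obtain C where "tree_levels C (space M)" "T = (\<Union>m. tree_level C (space M) m)"
    using is_tree_levels[OF tree] .
  then show ?thesis using tree_levels.countable_nodes by blast
qed

lemma dyadic_max_eq_SUP_indicator:
  "dyadic_max M T \<phi> x = (SUP I\<in>T. average M \<phi> I * indicator I x)"
proof (rule antisym)
  show "dyadic_max M T \<phi> x \<le> (SUP I\<in>T. average M \<phi> I * indicator I x)"
    unfolding dyadic_max_def average_def[symmetric]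
    by (rule SUP_least) (auto intro: SUP_upper2)
  show "(SUP I\<in>T. average M \<phi> I * indicator I x) \<le> dyadic_max M T \<phi> x"
    unfolding dyadic_max_def average_def[symmetric]
    by (rule SUP_least) (auto simp: indicator_def intro: SUP_upper)
qed

lemma borel_measurable_dyadic_max [measurable]: "dyadic_max M T \<phi> \<in> borel_measurable M"
  unfolding dyadic_max_eq_SUP_indicator[abs_def]
  using countable_tree tree_sets by (intro borel_measurable_SUP) auto

lemma level_set_dyadic_max:
  "{x\<in>space M. l < dyadic_max M T \<phi> x} = \<Union>{I\<in>T. l < average M \<phi> I}"
  using sets.sets_into_space[OF tree_sets]
  by (auto simp: dyadic_max_def average_def less_SUP_iff)

lemma level_set_dyadic_max_decomposition:
  obtains F where "countable F" "disjoint F" "F \<subseteq> {I\<in>T. l < average M \<phi> I}"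
    "{x\<in>space M. l < dyadic_max M T \<phi> x} = \<Union>F"
proof -
  obtain C where "tree_levels C (space M)" and T: "T = (\<Union>m. tree_level C (space M) m)"
    using is_tree_levels[OF tree] .
  interpret tree_levels C "space M" by fact
  let ?P = "\<lambda>I. l < average M \<phi> I"
  have F: "maximal_nodes ?P \<subseteq> {I\<in>T. ?P I}"
    unfolding maximal_nodes_def T by auto
  have "I \<subseteq> \<Union>(maximal_nodes ?P)" if I: "I \<in> T" "?P I" for I
  proof -
    have "I \<in> nodes" using I(1) unfolding T .
    moreover have "I \<noteq> {}" using tree_prob_pos[OF I(1)] by auto
    ultimately obtain J where "J \<in> maximal_nodes ?P" "I \<subseteq> J"
      using subset_maximal_node[of I ?P] I(2) by blast
    then show ?thesis by blast
  qed
  then have "\<Union>{I\<in>T. ?P I} = \<Union>(maximal_nodes ?P)" using F by blast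
  then show ?thesis
    using that[OF countable_maximal_nodes disjoint_maximal_nodes F] level_set_dyadic_max by simp
qed

lemma dyadic_max_weak_type:
  assumes [measurable]: "\<phi> \<in> borel_measurable M"
  shows "ennreal l * emeasure M {x\<in>space M. ennreal l < dyadic_max M T \<phi> x}
     \<le> (\<integral>\<^sup>+x\<in>{x\<in>space M. ennreal l < dyadic_max M T \<phi> x}. ennreal \<bar>\<phi> x\<bar> \<partial>M)"
proof -
  obtain F where F: "countable F" "disjoint F" "F \<subseteq> {I\<in>T. ennreal l < average M \<phi> I}"
    and level_set: "{x\<in>space M. ennreal l < dyadic_max M T \<phi> x} = \<Union>F"
    by (rule level_set_dyadic_max_decomposition)
  let ?N = "density M (\<lambda>x. ennreal \<bar>\<phi> x\<bar>)"
  have F_events: "F \<subseteq> events" using F(3) tree_sets by blast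
  have "ennreal l * emeasure M (\<Union>F) \<le> emeasure ?N (\<Union>F)"
  proof (rule cmult_emeasure_Union_le[OF _ F(1,2) F_events])
    fix I assume "I \<in> F"
    then have I: "I \<in> T" "ennreal l < average M \<phi> I" using F(3) by auto
    have inv: "ennreal (1 / prob I) * ennreal (prob I) = 1"
      using tree_prob_pos[OF I(1)] by (simp add: ennreal_mult[symmetric])
    have "average M \<phi> I * emeasure M I
        = ennreal (1 / prob I) * ennreal (prob I) * (\<integral>\<^sup>+x\<in>I. ennreal \<bar>\<phi> x\<bar> \<partial>M)"
      by (simp add: average_def emeasure_eq_measure mult_ac)
    also have "\<dots> = (\<integral>\<^sup>+x\<in>I. ennreal \<bar>\<phi> x\<bar> \<partial>M)"
      by (simp only: inv mult_1)
    also have "\<dots> = emeasure ?N I"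
      using tree_sets[OF I(1)] by (subst emeasure_density) auto
    finally show "ennreal l * emeasure M I \<le> emeasure ?N I"
      using I(2) by (metis mult_right_mono less_imp_le zero_le)
  qed simp
  also have "\<dots> = (\<integral>\<^sup>+x\<in>\<Union>F. ennreal \<bar>\<phi> x\<bar> \<partial>M)"
    using F_events F(1) by (intro emeasure_density) auto
  finally show ?thesis unfolding level_set .
qed

end

section \<open>Hardy averages of non-increasing profiles\<close>

lemma borel_measurable_indicator_antimono_on:
  fixes f :: "real \<Rightarrow> real"
  assumes "antimono_on A f" and "A \<in> sets borel"
  shows "(\<lambda>t. indicator A t * f t) \<in> borel_measurable borel"
proof -
  have "mono_on A (\<lambda>t. - f t)"
    using assms(1) by (auto simp: monotone_on_def)
  then have "(\<lambda>t. - (- f t)) \<in> borel_measurable (restrict_space borel A)"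
    by (intro borel_measurable_uminus borel_measurable_mono_on_fnc)
  then have "(\<lambda>t. indicator A t *\<^sub>R f t) \<in> borel_measurable borel"
    using assms(2) by (simp add: borel_measurable_restrict_space_iff)
  then show ?thesis by simp
qed

lemma set_integrable_const_Ioc:
  "t \<le> u \<Longrightarrow> set_integrable lborel {t<..u::real} (\<lambda>_. c :: real)"
  unfolding set_integrable_def by (intro integrable_scaleR_left integrable_real_indicator) auto

locale hardy_profile =
  fixes g :: "real \<Rightarrow> real"
  assumes profile_nonneg: "\<And>t. 0 < t \<Longrightarrow> t \<le> 1 \<Longrightarrow> 0 \<le> g t"
    and profile_integrable: "set_integrable lborel {0<..1} g"
    and profile_antimono: "\<And>s t. 0 < s \<Longrightarrow> s \<le> t \<Longrightarrow> t \<le> 1 \<Longrightarrow> g t \<le> g s"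
begin

lemma profile_integrable_on: "t \<le> 1 \<Longrightarrow> set_integrable lborel {0<..t} g"
  by (rule set_integrable_subset[OF profile_integrable]) auto

lemma profile_integrable_between:
  "0 \<le> t \<Longrightarrow> u \<le> 1 \<Longrightarrow> set_integrable lborel {t<..u} g"
  by (rule set_integrable_subset[OF profile_integrable]) auto

lemma borel_measurable_profile_on:
  assumes "t \<le> 1"
  shows "(\<lambda>s. ennreal (g s) * indicator {0<..t} s) \<in> borel_measurable lborel"
proof -
  have "(\<lambda>s. indicator {0<..t} s *\<^sub>R g s) \<in> borel_measurable lborel"
    using profile_integrable_on[OF assms] unfolding set_integrable_def by blast
  then have "(\<lambda>s. ennreal (indicator {0<..t} s *\<^sub>R g s)) \<in> borel_measurable lborel"
    by measurable
  moreover have "(\<lambda>s. ennreal (indicator {0<..t} s *\<^sub>R g s)) = (\<lambda>s. ennreal (g s) * indicator {0<..t} s)"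
    by (auto simp: indicator_def)
  ultimately show ?thesis by simp
qed

lemma profile_integral_nonneg: "t \<le> 1 \<Longrightarrow> 0 \<le> (LBINT s:{0<..t}. g s)"
  unfolding set_lebesgue_integral_def
  by (intro integral_nonneg_AE) (auto simp: indicator_def profile_nonneg)

lemma nn_integral_profile:
  assumes "t \<le> 1"
  shows "(\<integral>\<^sup>+s\<in>{0<..t}. ennreal (g s) \<partial>lborel) = ennreal (LBINT s:{0<..t}. g s)"
proof -
  have "(\<integral>\<^sup>+s\<in>{0<..t}. ennreal (g s) \<partial>lborel)
      = (\<integral>\<^sup>+s. ennreal (indicator {0<..t} s *\<^sub>R g s) \<partial>lborel)"
    by (intro nn_integral_cong) (auto simp: indicator_def)
  also have "\<dots> = ennreal (LBINT s:{0<..t}. g s)"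
    unfolding set_lebesgue_integral_def
    using profile_integrable_on[OF assms] assms
    by (intro nn_integral_eq_integral) (auto simp: set_integrable_def indicator_def profile_nonneg)
  finally show ?thesis .
qed

lemma avg_nonneg: "0 < t \<Longrightarrow> t \<le> 1 \<Longrightarrow> 0 \<le> avg g t"
  unfolding avg_def by (simp add: profile_integral_nonneg)

lemma profile_integral_ratio:
  assumes "0 < t" "t \<le> u" "u \<le> 1"
  shows "t * (LBINT s:{0<..u}. g s) \<le> u * (LBINT s:{0<..t}. g s)"
proof -
  let ?G = "\<lambda>t. LBINT s:{0<..t}. g s"
  have "{0<..u} = {0<..t} \<union> {t<..u}" using assms by auto
  then have split: "?G u = ?G t + (LBINT s:{t<..u}. g s)"
    using assms profile_integrable_on profile_integrable_between
    by (simp add: set_integral_Un)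
  \<comment> \<open>g is at most g t to the right of t and at least g t to its left\<close>
  have "(LBINT s:{t<..u}. g s) \<le> (LBINT s:{t<..u}. g t)"
    using assms profile_antimono
    by (intro set_integral_mono profile_integrable_between set_integrable_const_Ioc) auto
  also have "\<dots> = (u - t) * g t"
    using assms by (simp add: set_integral_const)
  finally have right: "(LBINT s:{t<..u}. g s) \<le> (u - t) * g t" .
  have "t * g t = (LBINT s:{0<..t}. g t)"
    using assms by (simp add: set_integral_const)
  also have "\<dots> \<le> ?G t"
    using assms profile_antimono set_integrable_const_Ioc[of 0 t "g t"]
    by (intro set_integral_mono profile_integrable_on) auto
  finally have left: "t * g t \<le> ?G t" .
  have "t * ?G u \<le> t * ?G t + t * ((u - t) * g t)"
    using split right assms(1) by (simp add: distrib_left)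
  also have "\<dots> = t * ?G t + (u - t) * (t * g t)" by simp
  also have "\<dots> \<le> t * ?G t + (u - t) * ?G t"
    using left assms by (intro add_left_mono mult_left_mono) auto
  finally show ?thesis by (simp add: algebra_simps)
qed

lemma avg_antimono:
  assumes "0 < t" "t \<le> u" "u \<le> 1"
  shows "avg g u \<le> avg g t"
  using profile_integral_ratio[OF assms] assms
  by (simp add: avg_def divide_simps mult.commute)

definition hardy_avg :: "real \<Rightarrow> real" where
  "hardy_avg t = indicator {0<..1} t * avg g t"

lemma borel_measurable_hardy_avg [measurable]: "hardy_avg \<in> borel_measurable borel"
  unfolding hardy_avg_def[abs_def]
  by (intro borel_measurable_indicator_antimono_on) (auto simp: monotone_on_def avg_antimono)

lemma nn_integral_hardy_avg_powr:
  "(\<integral>\<^sup>+t\<in>{0<..1}. ennreal (avg g t powr q) \<partial>lborel) = (\<integral>\<^sup>+t. ennreal (hardy_avg t powr q) \<partial>lborel)"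
  by (intro nn_integral_cong) (auto simp: hardy_avg_def indicator_def)

end

section \<open>Estimates for q-th powers\<close>

lemma epowr_less_iff:
  assumes "0 < q" "0 \<le> s"
  shows "ennreal s < epowr a q \<longleftrightarrow> ennreal (s powr (1 / q)) < a"
proof (cases a)
  case (real r)
  have "s < r powr q \<longleftrightarrow> s powr (1 / q) < r"
  proof
    assume "s < r powr q"
    then have "s powr (1 / q) < (r powr q) powr (1 / q)"
      using assms by (intro powr_less_mono2) auto
    then show "s powr (1 / q) < r" using real assms by (simp add: powr_powr)
  next
    assume "s powr (1 / q) < r"
    then have "(s powr (1 / q)) powr q < r powr q"
      using assms by (intro powr_less_mono2) auto
    then show "s < r powr q" using assms by (simp add: powr_powr)
  qed
  then show ?thesis using real assms by (simp add: epowr_def ennreal_less_iff)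
qed (simp add: epowr_def)

lemma powr_diff_le:
  fixes f h d q :: real
  assumes f: "0 \<le> f" "f \<le> h" and d: "0 < d" "d < 1" and q: "0 < q"
  shows "(h - f) powr q \<le> d powr q * h powr q + (h powr q - f powr q) / (1 - (1 - d) powr q)"
proof -
  define c where "c = 1 - (1 - d) powr q"
  have "(1 - d) powr q < 1 powr q" using d q by (intro powr_less_mono2) auto
  then have c: "0 < c" by (simp add: c_def)
  have "f powr q \<le> h powr q" using f q by (intro powr_mono2) auto
  then have right: "0 \<le> (h powr q - f powr q) / c" using c by simp
  show ?thesis
  proof (cases "(1 - d) * h \<le> f")
    case True
    then have "(h - f) powr q \<le> (d * h) powr q"
      using f q by (intro powr_mono2) (auto simp: algebra_simps)
    also have "\<dots> = d powr q * h powr q" using d f by (simp add: powr_mult)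
    finally show ?thesis using right by (simp add: c_def)
  next
    case False
    \<comment> \<open>then f is far below h, and h powr q is controlled by the gap h powr q - f powr q\<close>
    then have "f powr q \<le> ((1 - d) * h) powr q" using f q by (intro powr_mono2) auto
    also have "\<dots> = (1 - d) powr q * h powr q" using d f by (simp add: powr_mult)
    finally have "c * h powr q \<le> h powr q - f powr q" by (simp add: c_def algebra_simps)
    then have "h powr q \<le> (h powr q - f powr q) / c" using c by (simp add: field_simps)
    moreover have "(h - f) powr q \<le> h powr q" using f q by (intro powr_mono2) auto
    ultimately show ?thesis by (simp add: c_def add_increasing)
  qed
qed

lemma nn_integral_powr_diff_le:
  fixes h :: "'b \<Rightarrow> real" and f :: "'b \<Rightarrow> real"
  assumes [measurable]: "h \<in> borel_measurable N" "f \<in> borel_measurable N"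
    and "\<And>x. 0 \<le> f x" "\<And>x. f x \<le> h x" and "0 < d" "d < 1" "0 < q"
  shows "(\<integral>\<^sup>+x. ennreal ((h x - f x) powr q) \<partial>N)
    \<le> ennreal (d powr q) * (\<integral>\<^sup>+x. ennreal (h x powr q) \<partial>N)
      + ennreal (1 / (1 - (1 - d) powr q)) * (\<integral>\<^sup>+x. ennreal (h x powr q - f x powr q) \<partial>N)"
proof -
  let ?c = "1 - (1 - d) powr q"
  have "(1 - d) powr q < 1 powr q" using assms by (intro powr_less_mono2) auto
  then have c: "0 < ?c" by simp
  have "(\<integral>\<^sup>+x. ennreal ((h x - f x) powr q) \<partial>N)
    \<le> (\<integral>\<^sup>+x. ennreal (d powr q) * ennreal (h x powr q)
                + ennreal (1 / ?c) * ennreal (h x powr q - f x powr q) \<partial>N)"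
  proof (rule nn_integral_mono)
    fix x
    have gap: "0 \<le> h x powr q - f x powr q" using assms by (simp add: powr_mono2)
    have "ennreal ((h x - f x) powr q) \<le> ennreal (d powr q * h x powr q + (h x powr q - f x powr q) / ?c)"
      using assms by (intro ennreal_leI powr_diff_le) auto
    also have "\<dots> = ennreal (d powr q) * ennreal (h x powr q) + ennreal (1 / ?c) * ennreal (h x powr q - f x powr q)"
      using c gap by (simp add: ennreal_plus ennreal_mult[symmetric])
    finally show "ennreal ((h x - f x) powr q)
      \<le> ennreal (d powr q) * ennreal (h x powr q) + ennreal (1 / ?c) * ennreal (h x powr q - f x powr q)" .
  qed
  also have "\<dots> = ennreal (d powr q) * (\<integral>\<^sup>+x. ennreal (h x powr q) \<partial>N)
      + ennreal (1 / ?c) * (\<integral>\<^sup>+x. ennreal (h x powr q - f x powr q) \<partial>N)"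
    by (simp add: nn_integral_add nn_integral_cmult)
  finally show ?thesis .
qed

lemma nn_integral_diff_tendsto_zero:
  fixes u :: "nat \<Rightarrow> 'b \<Rightarrow> real" and v :: "'b \<Rightarrow> real"
  assumes [measurable]: "v \<in> borel_measurable N" "\<And>n. u n \<in> borel_measurable N"
    and "\<And>n x. 0 \<le> u n x" "\<And>n x. u n x \<le> v x"
    and finite: "(\<integral>\<^sup>+x. ennreal (v x) \<partial>N) < \<infinity>"
    and lim: "(\<lambda>n. \<integral>\<^sup>+x. ennreal (u n x) \<partial>N) \<longlonglongrightarrow> (\<integral>\<^sup>+x. ennreal (v x) \<partial>N)"
  shows "(\<lambda>n. \<integral>\<^sup>+x. ennreal (v x - u n x) \<partial>N) \<longlonglongrightarrow> 0"
proof -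
  define V where "V = (\<integral>\<^sup>+x. ennreal (v x) \<partial>N)"
  have "V \<noteq> \<top>" using finite by (simp add: V_def)
  have diff: "(\<integral>\<^sup>+x. ennreal (v x - u n x) \<partial>N) = V - (\<integral>\<^sup>+x. ennreal (u n x) \<partial>N)" for n
  proof -
    have "(\<integral>\<^sup>+x. ennreal (u n x) \<partial>N) \<le> V"
      unfolding V_def using assms(4) by (intro nn_integral_mono ennreal_leI)
    then show ?thesis
      unfolding V_def using assms(3,4) finite
      by (subst nn_integral_diff[symmetric]) (auto simp: ennreal_minus intro!: AE_I2 ennreal_leI)
  qed
  have "(\<lambda>n. V - (\<integral>\<^sup>+x. ennreal (u n x) \<partial>N)) \<longlonglongrightarrow> V - V"
    using lim \<open>V \<noteq> \<top>\<close> unfolding V_def[symmetric] by (intro tendsto_diff_ennreal tendsto_const) auto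
  then show ?thesis
    using ennreal_diff_self[OF \<open>V \<noteq> \<top>\<close>] by (simp add: diff)
qed

lemma nn_integral_powr_diff_tendsto_zero:
  fixes h :: "'b \<Rightarrow> real" and f :: "nat \<Rightarrow> 'b \<Rightarrow> real"
  assumes "0 < q"
    and [measurable]: "h \<in> borel_measurable N" "\<And>n. f n \<in> borel_measurable N"
    and bounds: "\<And>n x. 0 \<le> f n x" "\<And>n x. f n x \<le> h x"
    and finite: "(\<integral>\<^sup>+x. ennreal (h x powr q) \<partial>N) < \<infinity>"
    and lim: "(\<lambda>n. \<integral>\<^sup>+x. ennreal (f n x powr q) \<partial>N) \<longlonglongrightarrow> (\<integral>\<^sup>+x. ennreal (h x powr q) \<partial>N)"
  shows "(\<lambda>n. \<integral>\<^sup>+x. ennreal ((h x - f n x) powr q) \<partial>N) \<longlonglongrightarrow> 0"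
proof -
  define H where "H = (\<integral>\<^sup>+x. ennreal (h x powr q) \<partial>N)"
  define D where "D n = (\<integral>\<^sup>+x. ennreal (h x powr q - f n x powr q) \<partial>N)" for n
  define c where "c n = (\<integral>\<^sup>+x. ennreal ((h x - f n x) powr q) \<partial>N)" for n
  have "H \<noteq> \<top>" using finite by (simp add: H_def)
  have D_lim: "D \<longlonglongrightarrow> 0"
    unfolding D_def using bounds \<open>0 < q\<close> finite lim
    by (intro nn_integral_diff_tendsto_zero) (auto intro: powr_mono2)
  \<comment> \<open>let n \<rightarrow> \<infinity> in nn_integral_powr_diff_le, then d \<rightarrow> 0\<close>
  have "Limsup sequentially c \<le> ennreal (d powr q) * H" if "0 < d" "d < 1" for d
  proof -
    let ?b = "\<lambda>n. ennreal (d powr q) * H + ennreal (1 / (1 - (1 - d) powr q)) * D n"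
    have "?b \<longlonglongrightarrow> ennreal (d powr q) * H + ennreal (1 / (1 - (1 - d) powr q)) * 0"
      by (intro tendsto_add tendsto_const ennreal_tendsto_cmult D_lim) simp
    then have "Limsup sequentially ?b = ennreal (d powr q) * H"
      by (simp add: lim_imp_Limsup)
    moreover have "Limsup sequentially c \<le> Limsup sequentially ?b"
      unfolding c_def H_def D_def using that assms
      by (intro Limsup_mono always_eventually allI nn_integral_powr_diff_le) auto
    ultimately show ?thesis by simp
  qed
  then have ev: "eventually (\<lambda>d. Limsup sequentially c \<le> H * ennreal (d powr q)) (at_right 0)"
    by (auto simp: eventually_at_right_field mult.commute intro!: exI[of _ 1])
  have "((\<lambda>d. d powr q) \<longlongrightarrow> 0) (at_right (0::real))"
    using \<open>0 < q\<close>
    by (intro tendsto_zero_powrI[OF tendsto_ident_at tendsto_const])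
      (auto simp: eventually_at_right_field intro!: exI[of _ 1])
  then have "((\<lambda>d. H * ennreal (d powr q)) \<longlongrightarrow> H * ennreal 0) (at_right 0)"
    using \<open>H \<noteq> \<top>\<close> by (intro ennreal_tendsto_cmult tendsto_ennrealI) (auto simp: less_top)
  then have "Limsup sequentially c \<le> H * ennreal 0"
    using ev by (rule tendsto_le[OF trivial_limit_at_right_real _ tendsto_const])
  then show ?thesis
    unfolding c_def[symmetric] by (intro tendsto_0_if_Limsup_eq_0_ennreal) simp
qed

section \<open>The rearrangement of the dyadic maximal function\<close>

locale dyadic_setting = tree_space M T + hardy_profile g
  for M :: "'a measure" and T :: "'a set set" and g :: "real \<Rightarrow> real" +
  assumes nonatomic: "nonatomic M"
begin

text \<open>The decreasing rearrangement of M\<phi> on (0,1] as a real function, extended by 0; it is finite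
  there by rearr_dyadic_max_le_avg, so enn2real loses nothing.\<close>

definition rearr_max :: "('a \<Rightarrow> real) \<Rightarrow> real \<Rightarrow> real" where
  "rearr_max \<phi> t = indicator {0<..1} t * enn2real (rearr M (dyadic_max M T \<phi>) t)"

context
  fixes \<phi> :: "'a \<Rightarrow> real"
  assumes \<phi>_measurable [measurable]: "\<phi> \<in> borel_measurable M"
    and \<phi>_nonneg: "\<And>x. x \<in> space M \<Longrightarrow> 0 \<le> \<phi> x"
    and \<phi>_rearr: "\<And>t. 0 < t \<Longrightarrow> t \<le> 1 \<Longrightarrow> rearr M (\<lambda>x. ennreal (\<phi> x)) t = ennreal (g t)"
begin

lemma set_nn_integral_le_profile:
  assumes E: "E \<in> events"
  shows "(\<integral>\<^sup>+x\<in>E. ennreal (\<phi> x) \<partial>M) \<le> ennreal (LBINT s:{0<..prob E}. g s)"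
proof -
  have "(\<integral>\<^sup>+x\<in>E. ennreal (\<phi> x) \<partial>M) \<le> (\<integral>\<^sup>+s\<in>{0<..prob E}. ennreal (g s) \<partial>lborel)"
  proof (rule nn_integral_mono_level_sets)
    have [measurable]: "(\<lambda>s. ennreal (g s) * indicator {0<..prob E} s) \<in> borel_measurable borel"
      using borel_measurable_profile_on[of "prob E"] by simp
    show "(\<lambda>x. ennreal (\<phi> x) * indicator E x) \<in> borel_measurable M" using E by measurable
    show "(\<lambda>s. ennreal (g s) * indicator {0<..prob E} s) \<in> borel_measurable lborel" by simp
    fix s :: real assume "0 \<le> s"
    let ?S = "{x\<in>space M. ennreal s < ennreal (\<phi> x) * indicator E x}"
    let ?S' = "{x\<in>space M. ennreal s < ennreal (\<phi> x)}"
    let ?R = "{t\<in>space lborel. ennreal s < ennreal (g t) * indicator {0<..prob E} t}"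
    let ?a = "min (prob E) (prob ?S')"
    have "?S \<subseteq> E" "?S \<subseteq> ?S'" by (auto simp: indicator_def)
    then have "prob ?S \<le> ?a" using E by (auto intro!: finite_measure_mono)
    have "{0<..<?a} \<subseteq> ?R"
    proof
      fix t assume t: "t \<in> {0<..<?a}"
      then have "t < prob E" by simp
      then have "t \<le> 1" using prob_le_1[of E] by linarith
      have "ennreal s < rearr M (\<lambda>x. ennreal (\<phi> x)) t"
        using t by (intro less_rearr[OF nonatomic]) auto
      then show "t \<in> ?R" using t \<open>t \<le> 1\<close> \<phi>_rearr by auto
    qed
    moreover have "?R \<in> sets lborel" by measurable
    moreover have "emeasure M ?S \<le> emeasure lborel {0<..<?a}"
      using \<open>prob ?S \<le> ?a\<close> by (simp add: emeasure_eq_measure ennreal_leI)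
    ultimately show "emeasure M ?S \<le> emeasure lborel ?R"
      by (meson emeasure_mono order_trans)
  qed (rule sigma_finite_measure_axioms lborel.sigma_finite_measure_axioms)+
  also have "\<dots> = ennreal (LBINT s:{0<..prob E}. g s)"
    by (simp add: nn_integral_profile)
  finally show ?thesis .
qed

lemma rearr_dyadic_max_le_avg:
  assumes t: "0 < t" "t \<le> 1"
  shows "rearr M (dyadic_max M T \<phi>) t \<le> ennreal (avg g t)"
  unfolding rearr_def
proof (rule SUP_least)
  fix e assume e: "e \<in> {e \<in> events. prob e = t}"
  show "(INF x\<in>e. dyadic_max M T \<phi> x) \<le> ennreal (avg g t)"
  proof (rule ccontr)
    assume "\<not> ?thesis"
    then have "ennreal (avg g t) < (INF x\<in>e. dyadic_max M T \<phi> x)" by simp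
    then obtain m where m: "ennreal (avg g t) < m" "m < (INF x\<in>e. dyadic_max M T \<phi> x)"
      using dense by blast
    then obtain l where l: "m = ennreal l" "0 \<le> l"
      by (cases m) auto
    have "avg g t < l" using m(1) l avg_nonneg[OF t] by (simp add: ennreal_less_iff)
    let ?E = "{x\<in>space M. ennreal l < dyadic_max M T \<phi> x}"
    have "e \<subseteq> ?E"
      using e m(2) sets.sets_into_space[of e M] l(1) by (auto intro: less_le_trans INF_lower)
    then have "t \<le> prob ?E" using e by (auto intro: finite_measure_mono)
    then have E_pos: "0 < prob ?E" using t by linarith
    have "ennreal (l * prob ?E) = ennreal l * emeasure M ?E"
      using l(2) by (simp add: emeasure_eq_measure ennreal_mult)
    also have "\<dots> \<le> (\<integral>\<^sup>+x\<in>?E. ennreal \<bar>\<phi> x\<bar> \<partial>M)"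
      by (rule dyadic_max_weak_type) measurable
    also have "\<dots> = (\<integral>\<^sup>+x\<in>?E. ennreal (\<phi> x) \<partial>M)"
      by (intro nn_integral_cong) (auto simp: indicator_def \<phi>_nonneg)
    also have "\<dots> \<le> ennreal (LBINT s:{0<..prob ?E}. g s)"
      by (rule set_nn_integral_le_profile) measurable
    finally have "l * prob ?E \<le> (LBINT s:{0<..prob ?E}. g s)"
      using profile_integral_nonneg[of "prob ?E"] by (simp add: ennreal_le_iff)
    then have "l \<le> avg g (prob ?E)"
      using E_pos by (simp add: avg_def field_simps)
    also have "\<dots> \<le> avg g t"
      using t \<open>t \<le> prob ?E\<close> by (intro avg_antimono) auto
    finally show False using \<open>avg g t < l\<close> by simp
  qed
qed

lemma rearr_dyadic_max_eq:
  assumes "0 < t" "t \<le> 1"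
  shows "rearr M (dyadic_max M T \<phi>) t = ennreal (rearr_max \<phi> t)"
proof -
  have "rearr M (dyadic_max M T \<phi>) t \<noteq> \<top>"
    using rearr_dyadic_max_le_avg[OF assms] by (auto simp: top_unique)
  then show ?thesis using assms by (simp add: rearr_max_def less_top[symmetric])
qed

lemma rearr_max_nonneg: "0 \<le> rearr_max \<phi> t"
  by (simp add: rearr_max_def)

lemma rearr_max_le_hardy_avg: "rearr_max \<phi> t \<le> hardy_avg t"
proof (cases "t \<in> {0<..1}")
  case True
  then have "ennreal (rearr_max \<phi> t) \<le> ennreal (avg g t)"
    using rearr_dyadic_max_le_avg rearr_dyadic_max_eq by simp
  then show ?thesis
    using True avg_nonneg by (simp add: hardy_avg_def ennreal_le_iff)
qed (simp add: rearr_max_def hardy_avg_def)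

lemma nn_integral_rearr_max_powr_le:
  assumes "0 \<le> q"
  shows "(\<integral>\<^sup>+t. ennreal (rearr_max \<phi> t powr q) \<partial>lborel) \<le> (\<integral>\<^sup>+t. ennreal (hardy_avg t powr q) \<partial>lborel)"
proof (rule nn_integral_mono)
  fix t
  show "ennreal (rearr_max \<phi> t powr q) \<le> ennreal (hardy_avg t powr q)"
    using assms rearr_max_nonneg rearr_max_le_hardy_avg by (intro ennreal_leI powr_mono2)
qed

lemma borel_measurable_rearr_max [measurable]: "rearr_max \<phi> \<in> borel_measurable borel"
proof -
  have "antimono_on {0<..1} (\<lambda>t. enn2real (rearr M (dyadic_max M T \<phi>) t))"
  proof (rule monotone_onI)
    fix t u :: real assume tu: "t \<in> {0<..1}" "u \<in> {0<..1}" "t \<le> u"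
    have "rearr M (dyadic_max M T \<phi>) u \<le> rearr M (dyadic_max M T \<phi>) t"
      using tu by (intro rearr_antimono[OF nonatomic]) auto
    then show "enn2real (rearr M (dyadic_max M T \<phi>) u) \<le> enn2real (rearr M (dyadic_max M T \<phi>) t)"
      using tu rearr_dyadic_max_eq[of t] by (intro enn2real_mono) auto
  qed
  then show ?thesis
    unfolding rearr_max_def[abs_def] by (intro borel_measurable_indicator_antimono_on) auto
qed

lemma nn_integral_dyadic_max_powr_le:
  assumes "0 < q"
  shows "(\<integral>\<^sup>+x. epowr (dyadic_max M T \<phi> x) q \<partial>M) \<le> (\<integral>\<^sup>+t. ennreal (rearr_max \<phi> t powr q) \<partial>lborel)"
proof (rule nn_integral_mono_level_sets)
  show "(\<lambda>x. epowr (dyadic_max M T \<phi> x) q) \<in> borel_measurable M"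
    unfolding epowr_def by measurable
  show "(\<lambda>t. ennreal (rearr_max \<phi> t powr q)) \<in> borel_measurable lborel" by measurable
  fix s :: real assume s: "0 \<le> s"
  let ?S = "{x\<in>space M. ennreal (s powr (1 / q)) < dyadic_max M T \<phi> x}"
  let ?R = "{t\<in>space lborel. ennreal s < ennreal (rearr_max \<phi> t powr q)}"
  have "{0<..<prob ?S} \<subseteq> ?R"
  proof
    fix t assume t: "t \<in> {0<..<prob ?S}"
    then have "t < prob ?S" by simp
    then have "t \<le> 1" using prob_le_1[of ?S] by linarith
    have "ennreal (s powr (1 / q)) < rearr M (dyadic_max M T \<phi>) t"
      using t by (intro less_rearr[OF nonatomic]) auto
    then have "ennreal s < epowr (ennreal (rearr_max \<phi> t)) q"
      using t \<open>t \<le> 1\<close> by (simp add: epowr_less_iff[OF assms s] rearr_dyadic_max_eq)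
    then show "t \<in> ?R" by (simp add: epowr_def rearr_max_nonneg)
  qed
  moreover have "?R \<in> sets lborel" by measurable
  ultimately have "emeasure lborel {0<..<prob ?S} \<le> emeasure lborel ?R"
    by (rule emeasure_mono)
  moreover have "{x\<in>space M. ennreal s < epowr (dyadic_max M T \<phi> x) q} = ?S"
    using epowr_less_iff[OF assms s] by auto
  ultimately show "emeasure M {x\<in>space M. ennreal s < epowr (dyadic_max M T \<phi> x) q} \<le> emeasure lborel ?R"
    by (simp add: emeasure_eq_measure)
qed (rule sigma_finite_measure_axioms lborel.sigma_finite_measure_axioms)+

lemma nn_integral_ediff_rearr_dyadic_max:
  "(\<integral>\<^sup>+t\<in>{0<..1}. epowr (ediff (rearr M (dyadic_max M T \<phi>) t) (avg g t)) q \<partial>lborel)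
     = (\<integral>\<^sup>+t. ennreal ((hardy_avg t - rearr_max \<phi> t) powr q) \<partial>lborel)"
proof (intro nn_integral_cong)
  fix t
  show "epowr (ediff (rearr M (dyadic_max M T \<phi>) t) (avg g t)) q * indicator {0<..1} t
      = ennreal ((hardy_avg t - rearr_max \<phi> t) powr q)"
  proof (cases "t \<in> {0<..1}")
    case True
    then have "\<bar>rearr_max \<phi> t - avg g t\<bar> = hardy_avg t - rearr_max \<phi> t"
      using rearr_max_le_hardy_avg[of t] by (simp add: hardy_avg_def)
    then show ?thesis
      using True rearr_max_le_hardy_avg[of t]
      by (simp add: rearr_dyadic_max_eq ediff_def epowr_def rearr_max_nonneg)
  qed (simp add: rearr_max_def hardy_avg_def)
qed

end

end

theorem theorem6p1:
  fixes M :: "'a measure" and T :: "'a set set" and q :: real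
    and g :: "real \<Rightarrow> real" and \<phi> :: "nat \<Rightarrow> 'a \<Rightarrow> real"
  assumes "prob_space M" and "nonatomic M" and "is_tree M T"
    and "0 < q" and "q < 1"
    and "\<forall>t\<in>{0<..1}. 0 \<le> g t"
    and "set_integrable lborel {0<..1} g"
    and "\<forall>s t. 0 < s \<longrightarrow> s \<le> t \<longrightarrow> t \<le> 1 \<longrightarrow> g t \<le> g s"
    and "(\<integral>\<^sup>+ t\<in>{0<..1}. ennreal (avg g t powr q) \<partial>lborel) < \<infinity>"
    and "\<forall>n. \<phi> n \<in> borel_measurable M"
    and "\<forall>n. \<forall>x\<in>space M. 0 \<le> \<phi> n x"
    and "\<forall>n. \<forall>t\<in>{0<..1}. rearr M (\<lambda>x. ennreal (\<phi> n x)) t = ennreal (g t)"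
    and "(\<lambda>n. \<integral>\<^sup>+ x. epowr (dyadic_max M T (\<phi> n) x) q \<partial>M)
           \<longlonglongrightarrow> (\<integral>\<^sup>+ t\<in>{0<..1}. ennreal (avg g t powr q) \<partial>lborel)"
  shows "(\<lambda>n. \<integral>\<^sup>+ t\<in>{0<..1}. epowr (ediff (rearr M (dyadic_max M T (\<phi> n)) t) (avg g t)) q \<partial>lborel)
           \<longlonglongrightarrow> 0"
proof -
  interpret dyadic_setting M T g
    using assms(1-3,6-8)
    by (intro dyadic_setting.intro tree_space.intro tree_space_axioms.intro hardy_profile.intro
        dyadic_setting_axioms.intro) auto
  have \<phi>: "\<phi> n \<in> borel_measurable M" "\<And>x. x \<in> space M \<Longrightarrow> 0 \<le> \<phi> n x"
    "\<And>t. 0 < t \<Longrightarrow> t \<le> 1 \<Longrightarrow> rearr M (\<lambda>x. ennreal (\<phi> n x)) t = ennreal (g t)" for n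
    using assms(10-12) by auto
  have sandwich: "(\<lambda>n. \<integral>\<^sup>+t. ennreal (rearr_max (\<phi> n) t powr q) \<partial>lborel)
      \<longlonglongrightarrow> (\<integral>\<^sup>+t. ennreal (hardy_avg t powr q) \<partial>lborel)"
  proof (rule tendsto_sandwich[OF _ _ assms(13)[unfolded nn_integral_hardy_avg_powr] tendsto_const])
    show "\<forall>\<^sub>F n in sequentially. (\<integral>\<^sup>+x. epowr (dyadic_max M T (\<phi> n) x) q \<partial>M)
        \<le> (\<integral>\<^sup>+t. ennreal (rearr_max (\<phi> n) t powr q) \<partial>lborel)"
      by (rule always_eventually) (use nn_integral_dyadic_max_powr_le[OF \<phi> \<open>0 < q\<close>] in blast)
    show "\<forall>\<^sub>F n in sequentially. (\<integral>\<^sup>+t. ennreal (rearr_max (\<phi> n) t powr q) \<partial>lborel)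
        \<le> (\<integral>\<^sup>+t. ennreal (hardy_avg t powr q) \<partial>lborel)"
      by (rule always_eventually) (use nn_integral_rearr_max_powr_le[OF \<phi>] \<open>0 < q\<close> in auto)
  qed
  have "(\<lambda>n. \<integral>\<^sup>+t. ennreal ((hardy_avg t - rearr_max (\<phi> n) t) powr q) \<partial>lborel) \<longlonglongrightarrow> 0"
  proof (rule nn_integral_powr_diff_tendsto_zero[OF \<open>0 < q\<close> _ _ _ _ _ sandwich])
    show "hardy_avg \<in> borel_measurable lborel" by simp
    show "rearr_max (\<phi> n) \<in> borel_measurable lborel" for n
      using borel_measurable_rearr_max[OF \<phi>] by simp
    show "0 \<le> rearr_max (\<phi> n) t" for n t by (rule rearr_max_nonneg[OF \<phi>])
    show "rearr_max (\<phi> n) t \<le> hardy_avg t" for n t by (rule rearr_max_le_hardy_avg[OF \<phi>])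
    show "(\<integral>\<^sup>+t. ennreal (hardy_avg t powr q) \<partial>lborel) < \<infinity>"
      using assms(9) by (simp add: nn_integral_hardy_avg_powr)
  qed
  then show ?thesis by (simp add: nn_integral_ediff_rearr_dyadic_max[OF \<phi>])
qed

end
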